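(* Let $\mathbb C$ be a semi-abelian variety of universal algebras, $A$ an algebra in $\mathbb C$, and $X,Y$ subalgebras of $A$. Then $[X,Y]_{\mathbb C,A}=[X,Y]_{A\mid 1}$.
   Context: A semi-abelian variety is a variety of universal algebras which, as a category, is pointed and Bourn-protomodular (equivalently, a pointed classically ideal determined variety); $0$ denotes its unique constant. A term $t(\mathbf w_1,\dots,\mathbf w_k,\mathbf x_1,\dots,\mathbf x_m,\mathbf y_1,\dots,\mathbf y_n)$ of $\mathbb C$, with $\{\mathbf x_1,\dots,\mathbf x_m\}$ and $\{\mathbf y_1,\dots,\mathbf y_n\}$ disjoint sets of variables, is a commutator term in $(\mathbf x_1,\dots,\mathbf x_m)$ and $(\mathbf y_1,\dots,\mathbf y_n)$ if the identities $t(\mathbf w_1,\dots,\mathbf w_k,0,\dots,0,\mathbf y_1,\dots,\mathbf y_n)=0=t(\mathbf w_1,\dots,\mathbf w_k,\mathbf x_1,\dots,\mathbf x_m,0,\dots,0)$ hold in $\mathbb C$. $[X,Y]_{\mathbb C,A}$ is the set of all elements $t_A(w_1,\dots,w_k,x_1,\dots,x_m,y_1,\dots,y_n)$ of $A$ where $t$ is such a commutator term, $w_i\in A$, $x_i\in X$, $y_i\in Y$. $[X,Y]_{A\mid 1}$ is the image under the homomorphism $[1_A,x,y]\colon A+X+Y\to A$ (with $x,y$ the inclusions) of the kernel (preimage of $0$) of the homomorphism $\langle[\iota_1,\iota_2,0],[\iota_1,0,\iota_2]\rangle\colon A+X+Y\to (A+X)\times_A(A+Y)$, where $\iota_i$ are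 coproduct injections and $(A+X)\times_A(A+Y)$ is the pullback of $[1,0]\colon A+X\to A$ and $[1,0]\colon A+Y\to A$. *)

theory Defs
  imports Main
begin

datatype ('f, 'v) trm = Var 'v | Fun 'f "('f, 'v) trm list"

fun vars :: "('f, 'v) trm \<Rightarrow> 'v set" where
  "vars (Var v) = {v}"
| "vars (Fun f ts) = (\<Union>t\<in>set ts. vars t)"

fun wf_trm :: "('f \<Rightarrow> nat) \<Rightarrow> ('f, 'v) trm \<Rightarrow> bool" where
  "wf_trm ar (Var v) = True"
| "wf_trm ar (Fun f ts) = (length ts = ar f \<and> (\<forall>t\<in>set ts. wf_trm ar t))"

definition wf_over :: "('f \<Rightarrow> nat) \<Rightarrow> 'v set \<Rightarrow> ('f, 'v) trm \<Rightarrow> bool" where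
  "wf_over ar G t \<longleftrightarrow> wf_trm ar t \<and> vars t \<subseteq> G"

fun subst :: "('v \<Rightarrow> ('f, 'w) trm) \<Rightarrow> ('f, 'v) trm \<Rightarrow> ('f, 'w) trm" where
  "subst \<sigma> (Var v) = \<sigma> v"
| "subst \<sigma> (Fun f ts) = Fun f (map (subst \<sigma>) ts)"

text \<open>A ground (variable-free) term, viewed as a term over any variable type.\<close>
definition ground_as :: "('f, nat) trm \<Rightarrow> ('f, 'w) trm" where
  "ground_as t = subst (\<lambda>_. Var undefined) t"

text \<open>An algebra is a carrier U with interpretation I of the operation symbols
(only applied to argument lists of the right length inside U).\<close>

fun eval :: "('f \<Rightarrow> 'a list \<Rightarrow> 'a) \<Rightarrow> ('v \<Rightarrow> 'a) \<Rightarrow> ('f, 'v) trm \<Rightarrow> 'a" where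
  "eval I \<rho> (Var v) = \<rho> v"
| "eval I \<rho> (Fun f ts) = I f (map (eval I \<rho>) ts)"

definition closed_under :: "('f \<Rightarrow> nat) \<Rightarrow> ('f \<Rightarrow> 'a list \<Rightarrow> 'a) \<Rightarrow> 'a set \<Rightarrow> bool" where
  "closed_under ar I U \<longleftrightarrow>
     (\<forall>f as. length as = ar f \<and> set as \<subseteq> U \<longrightarrow> I f as \<in> U)"

text \<open>Model of the set of identities E (an algebra of the variety C = Mod(E)).\<close>
definition model :: "('f \<Rightarrow> nat) \<Rightarrow> (('f, nat) trm \<times> ('f, nat) trm) set
     \<Rightarrow> 'a set \<Rightarrow> ('f \<Rightarrow> 'a list \<Rightarrow> 'a) \<Rightarrow> bool" where
  "model ar E U I \<longleftrightarrow> closed_under ar I U \<and>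
     (\<forall>(s, t)\<in>E. \<forall>\<rho>. (\<forall>v. \<rho> v \<in> U) \<longrightarrow> eval I \<rho> s = eval I \<rho> t)"

definition is_hom :: "('f \<Rightarrow> nat) \<Rightarrow> 'a set \<Rightarrow> ('f \<Rightarrow> 'a list \<Rightarrow> 'a)
     \<Rightarrow> 'b set \<Rightarrow> ('f \<Rightarrow> 'b list \<Rightarrow> 'b) \<Rightarrow> ('a \<Rightarrow> 'b) \<Rightarrow> bool" where
  "is_hom ar U I V J h \<longleftrightarrow> (\<forall>u\<in>U. h u \<in> V) \<and>
     (\<forall>f as. length as = ar f \<and> set as \<subseteq> U \<longrightarrow> h (I f as) = J f (map h as))"

definition gen_sub :: "('f \<Rightarrow> nat) \<Rightarrow> ('f \<Rightarrow> 'a list \<Rightarrow> 'a) \<Rightarrow> 'a set \<Rightarrow> 'a set" where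
  "gen_sub ar I S = \<Inter>{T. S \<subseteq> T \<and> closed_under ar I T}"

inductive eqc :: "('f \<Rightarrow> nat) \<Rightarrow> (('f, nat) trm \<times> ('f, nat) trm) set
     \<Rightarrow> ('f, nat) trm \<Rightarrow> ('f, nat) trm \<Rightarrow> bool"
  for ar E where
  eqc_refl: "wf_trm ar t \<Longrightarrow> eqc ar E t t"
| eqc_sym: "eqc ar E s t \<Longrightarrow> eqc ar E t s"
| eqc_trans: "eqc ar E s t \<Longrightarrow> eqc ar E t u \<Longrightarrow> eqc ar E s u"
| eqc_cong: "length ss = ar f \<Longrightarrow> list_all2 (eqc ar E) ss ts \<Longrightarrow>
     eqc ar E (Fun f ss) (Fun f ts)"
| eqc_ax: "(l, r) \<in> E \<Longrightarrow> (\<forall>n. wf_trm ar (\<sigma> n)) \<Longrightarrow>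
     eqc ar E (subst \<sigma> l) (subst \<sigma> r)"
monos list_all2_mono

text \<open>Equality in the C-algebra presented by generators G and relations R:
the C-congruence on wf terms over G generated by the instances of E and by R.\<close>

inductive pres_eq :: "('f \<Rightarrow> nat) \<Rightarrow> (('f, nat) trm \<times> ('f, nat) trm) set
     \<Rightarrow> 'g set \<Rightarrow> (('f, 'g) trm \<Rightarrow> ('f, 'g) trm \<Rightarrow> bool)
     \<Rightarrow> ('f, 'g) trm \<Rightarrow> ('f, 'g) trm \<Rightarrow> bool"
  for ar E G R where
  pres_refl: "wf_over ar G t \<Longrightarrow> pres_eq ar E G R t t"
| pres_sym: "pres_eq ar E G R s t \<Longrightarrow> pres_eq ar E G R t s"
| pres_trans: "pres_eq ar E G R s t \<Longrightarrow> pres_eq ar E G R t u \<Longrightarrow> pres_eq ar E G R s u"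
| pres_cong: "length ss = ar f \<Longrightarrow> list_all2 (pres_eq ar E G R) ss ts \<Longrightarrow>
     pres_eq ar E G R (Fun f ss) (Fun f ts)"
| pres_ax: "(l, r) \<in> E \<Longrightarrow> (\<forall>n. wf_over ar G (\<sigma> n)) \<Longrightarrow>
     pres_eq ar E G R (subst \<sigma> l) (subst \<sigma> r)"
| pres_rel: "R s t \<Longrightarrow> pres_eq ar E G R s t"
monos list_all2_mono

text \<open>Diagram (operation table) of an algebra (U, I) whose elements are
inserted as generators via the tag function tg.\<close>
definition diag :: "('f \<Rightarrow> nat) \<Rightarrow> ('f \<Rightarrow> 'a list \<Rightarrow> 'a) \<Rightarrow> ('a \<Rightarrow> 'g) \<Rightarrow> 'a set
     \<Rightarrow> ('f, 'g) trm \<Rightarrow> ('f, 'g) trm \<Rightarrow> bool" where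
  "diag ar I tg U s t \<longleftrightarrow> (\<exists>f as. length as = ar f \<and> set as \<subseteq> U \<and>
     s = Fun f (map (Var \<circ> tg) as) \<and> t = Var (tg (I f as)))"

text \<open>Binary coproduct A + X (X with the operations of A): generators Inl a, Inr x.\<close>
definition gens2 :: "'a set \<Rightarrow> 'a set \<Rightarrow> ('a + 'a) set" where
  "gens2 A X = Inl ` A \<union> Inr ` X"

definition rel2 :: "('f \<Rightarrow> nat) \<Rightarrow> ('f \<Rightarrow> 'a list \<Rightarrow> 'a) \<Rightarrow> 'a set \<Rightarrow> 'a set
     \<Rightarrow> ('f, 'a + 'a) trm \<Rightarrow> ('f, 'a + 'a) trm \<Rightarrow> bool" where
  "rel2 ar I A X s t \<longleftrightarrow> diag ar I Inl A s t \<or> diag ar I Inr X s t"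

definition eq2 where
  "eq2 ar E I A X = pres_eq ar E (gens2 A X) (rel2 ar I A X)"

text \<open>Ternary coproduct A + X + Y: generators Inl a, Inr (Inl x), Inr (Inr y).\<close>
definition gens3 :: "'a set \<Rightarrow> 'a set \<Rightarrow> 'a set \<Rightarrow> ('a + 'a + 'a) set" where
  "gens3 A X Y = Inl ` A \<union> (Inr \<circ> Inl) ` X \<union> (Inr \<circ> Inr) ` Y"

text \<open>The coproduct maps [iota1, iota2, 0] : A+X+Y -> A+X and
[iota1, 0, iota2] : A+X+Y -> A+Y on representing terms.\<close>
definition to_AX :: "('f, nat) trm \<Rightarrow> ('f, 'a + 'a + 'a) trm \<Rightarrow> ('f, 'a + 'a) trm" where
  "to_AX z = subst (\<lambda>g. case g of Inl a \<Rightarrow> Var (Inl a) | Inr (Inl x) \<Rightarrow> Var (Inr x)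
                                   | Inr (Inr y) \<Rightarrow> ground_as z)"

definition to_AY :: "('f, nat) trm \<Rightarrow> ('f, 'a + 'a + 'a) trm \<Rightarrow> ('f, 'a + 'a) trm" where
  "to_AY z = subst (\<lambda>g. case g of Inl a \<Rightarrow> Var (Inl a) | Inr (Inl x) \<Rightarrow> ground_as z
                                   | Inr (Inr y) \<Rightarrow> Var (Inr y))"

text \<open>The map [1_A, x, y] : A+X+Y -> A on representing terms.\<close>
definition fold3 :: "('f \<Rightarrow> 'a list \<Rightarrow> 'a) \<Rightarrow> ('f, 'a + 'a + 'a) trm \<Rightarrow> 'a" where
  "fold3 I t = eval I (\<lambda>g. case g of Inl a \<Rightarrow> a | Inr (Inl x) \<Rightarrow> x | Inr (Inr y) \<Rightarrow> y) t"

text \<open>[X,Y]_{A|1}: image under [1_A,x,y] of the kernel of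
<[iota1,iota2,0],[iota1,0,iota2]> : A+X+Y -> (A+X) x_A (A+Y), whose zero is (0,0).\<close>
definition comm_A1 :: "('f \<Rightarrow> nat) \<Rightarrow> (('f, nat) trm \<times> ('f, nat) trm) set \<Rightarrow> ('f, nat) trm
     \<Rightarrow> 'a set \<Rightarrow> ('f \<Rightarrow> 'a list \<Rightarrow> 'a) \<Rightarrow> 'a set \<Rightarrow> 'a set \<Rightarrow> 'a set" where
  "comm_A1 ar E z A I X Y =
     {fold3 I t | t. wf_over ar (gens3 A X Y) t \<and>
        eq2 ar E I A X (to_AX z t) (ground_as z) \<and>
        eq2 ar E I A Y (to_AY z t) (ground_as z)}"

text \<open>t is a commutator term in the variables Xv and Yv (all other variables of t
play the role of the w's), with respect to the constant z of the variety.\<close>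
definition comm_term :: "('f \<Rightarrow> nat) \<Rightarrow> (('f, nat) trm \<times> ('f, nat) trm) set \<Rightarrow> ('f, nat) trm
     \<Rightarrow> nat set \<Rightarrow> nat set \<Rightarrow> ('f, nat) trm \<Rightarrow> bool" where
  "comm_term ar E z Xv Yv t \<longleftrightarrow> wf_trm ar t \<and> Xv \<inter> Yv = {} \<and>
     eqc ar E (subst (\<lambda>v. if v \<in> Xv then z else Var v) t) z \<and>
     eqc ar E (subst (\<lambda>v. if v \<in> Yv then z else Var v) t) z"

definition comm_CA :: "('f \<Rightarrow> nat) \<Rightarrow> (('f, nat) trm \<times> ('f, nat) trm) set \<Rightarrow> ('f, nat) trm
     \<Rightarrow> 'a set \<Rightarrow> ('f \<Rightarrow> 'a list \<Rightarrow> 'a) \<Rightarrow> 'a set \<Rightarrow> 'a set \<Rightarrow> 'a set" where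
  "comm_CA ar E z A I X Y =
     {eval I \<rho> t | t \<rho> Xv Yv. comm_term ar E z Xv Yv t \<and> (\<forall>v. \<rho> v \<in> A) \<and>
        \<rho> ` Xv \<subseteq> X \<and> \<rho> ` Yv \<subseteq> Y}"

text \<open>Pointed: z is a constant (well-formed ground term) and every constant equals z
in C, i.e. the initial algebra F(empty) is the one-element algebra.\<close>
definition pointed_var :: "('f \<Rightarrow> nat) \<Rightarrow> (('f, nat) trm \<times> ('f, nat) trm) set
     \<Rightarrow> ('f, nat) trm \<Rightarrow> bool" where
  "pointed_var ar E z \<longleftrightarrow> wf_trm ar z \<and> vars z = {} \<and>
     (\<forall>t. wf_trm ar t \<and> vars t = {} \<longrightarrow> eqc ar E t z)"

text \<open>Bourn-protomodularity for a pointed variety (split short five lemma form):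
for every split epimorphism p : B -> D with section s in C, the kernel of p and
s jointly strongly epimorphic, i.e. ker p together with s(D) generates B.
Algebras are quantified over carriers of the type 'b.\<close>
definition protomodular_on :: "('f \<Rightarrow> nat) \<Rightarrow> (('f, nat) trm \<times> ('f, nat) trm) set
     \<Rightarrow> ('f, nat) trm \<Rightarrow> 'b itself \<Rightarrow> bool" where
  "protomodular_on ar E z (_ :: 'b itself) \<longleftrightarrow>
     (\<forall>(B :: 'b set) IB (D :: 'b set) ID p s.
        model ar E B IB \<and> model ar E D ID \<and> is_hom ar B IB D ID p \<and> is_hom ar D ID B IB s \<and>
        (\<forall>d\<in>D. p (s d) = d) \<longrightarrow>
        B \<subseteq> gen_sub ar IB ({b \<in> B. p b = eval ID (\<lambda>_. undefined) z} \<union> s ` D))"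

definition semi_abelian_on where
  "semi_abelian_on ar E z T \<longleftrightarrow>
     (\<forall>(l, r)\<in>E. wf_trm ar l \<and> wf_trm ar r) \<and> pointed_var ar E z \<and> protomodular_on ar E z T"

end

theory Submission
  imports Defs
begin

text \<open>Protomodularity, applied to the split epimorphism F(x,y) \<rightarrow> F(y) sending x and y to y,
writes x as a term in elements of its kernel and in terms in y alone; replacing the latter by 0
gives a binary term q with q(x,x) = 0 and q(x,0) = x. An element of [X,Y]_{A|1} is the value of a
term t in elements of A, X and Y that vanishes when the X-entries, the Y-entries, or both are
replaced by 0. Then s = q(t, t[Y:=0]) vanishes at Y := 0 and still has the value of t, and
q(s, s[X:=0]) is a commutator term with that value. Conversely, the two defining identities of a
commutator term say exactly that it lies in the kernel, read in A+X+Y.\<close>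

lemma subst_subst: "subst \<sigma> (subst \<tau> t) = subst (\<lambda>v. subst \<sigma> (\<tau> v)) t"
  by (induction t) auto

lemma subst_cong: "(\<And>v. v \<in> vars t \<Longrightarrow> \<sigma> v = \<sigma>' v) \<Longrightarrow> subst \<sigma> t = subst \<sigma>' t"
  by (induction t) auto

lemma subst_Var [simp]: "subst Var t = t"
  by (induction t) (auto simp: map_idI)

lemma subst_ground: "vars t = {} \<Longrightarrow> subst \<sigma> t = subst \<sigma>' t"
  by (rule subst_cong) auto

lemma subst_ground_id: "vars t = {} \<Longrightarrow> subst \<sigma> t = t"
  using subst_ground[of t \<sigma> Var] by simp

lemma vars_subst: "vars (subst \<sigma> t) = (\<Union>v\<in>vars t. vars (\<sigma> v))"
  by (induction t) auto

lemma finite_vars: "finite (vars t)"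
  by (induction t) auto

lemma wf_trm_subst:
  "wf_trm ar t \<Longrightarrow> (\<And>v. v \<in> vars t \<Longrightarrow> wf_trm ar (\<sigma> v)) \<Longrightarrow> wf_trm ar (subst \<sigma> t)"
  by (induction t) auto

lemma eval_subst: "eval I \<rho> (subst \<sigma> t) = eval I (\<lambda>v. eval I \<rho> (\<sigma> v)) t"
  by (induction t) (auto intro!: arg_cong[where f="I _"])

lemma eval_cong: "(\<And>v. v \<in> vars t \<Longrightarrow> \<rho> v = \<rho>' v) \<Longrightarrow> eval I \<rho> t = eval I \<rho>' t"
proof (induction t)
  case (Fun f ts)
  have "map (eval I \<rho>) ts = map (eval I \<rho>') ts"
    by (rule map_cong[OF refl], rule Fun.IH) (use Fun.prems in auto)
  then show ?case by (metis eval.simps(2))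
qed simp

lemma eval_ground: "vars t = {} \<Longrightarrow> eval I \<rho> t = eval I \<rho>' t"
  by (rule eval_cong) auto

lemma eval_closed:
  "closed_under ar I U \<Longrightarrow> wf_trm ar t \<Longrightarrow> (\<And>v. v \<in> vars t \<Longrightarrow> \<rho> v \<in> U) \<Longrightarrow> eval I \<rho> t \<in> U"
proof (induction t)
  case (Fun f ts)
  have "set (map (eval I \<rho>) ts) \<subseteq> U"
    using Fun by auto
  then show ?case using Fun.prems unfolding closed_under_def by simp
qed auto

lemma gen_sub_subset_term_values:
  "gen_sub ar I S \<subseteq> {eval I (\<lambda>x. x) u | u. wf_trm ar u \<and> vars u \<subseteq> S}"
proof -
  let ?T = "{eval I (\<lambda>x. x) u | u. wf_trm ar u \<and> vars u \<subseteq> S}"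
  have "S \<subseteq> ?T"
  proof
    fix x assume "x \<in> S"
    then show "x \<in> ?T" by (intro CollectI exI[of _ "Var x"]) auto
  qed
  moreover have "closed_under ar I ?T"
    unfolding closed_under_def
  proof (intro allI impI)
    fix f as assume as: "length as = ar f \<and> set as \<subseteq> ?T"
    then have "\<forall>x\<in>set as. \<exists>u. wf_trm ar u \<and> vars u \<subseteq> S \<and> x = eval I (\<lambda>x. x) u" by blast
    then obtain g where g: "\<And>x. x \<in> set as \<Longrightarrow> wf_trm ar (g x) \<and> vars (g x) \<subseteq> S \<and> x = eval I (\<lambda>x. x) (g x)"
      by metis
    have "map (eval I (\<lambda>x. x)) (map g as) = as"
      by (rule map_idI[of as "eval I (\<lambda>x. x) \<circ> g", unfolded map_map[symmetric]]) (use g in auto)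
    then have "eval I (\<lambda>x. x) (Fun f (map g as)) = I f as" by simp
    moreover have "wf_trm ar (Fun f (map g as))" "vars (Fun f (map g as)) \<subseteq> S" using as g by auto
    ultimately show "I f as \<in> ?T" by (metis (mono_tags, lifting) mem_Collect_eq)
  qed
  ultimately show ?thesis unfolding gen_sub_def by blast
qed

section \<open>Equational logic\<close>

declare eqc.eqc_trans [trans]

lemma list_all2_map_eqI: "list_all2 (\<lambda>x y. f x = g y) xs ys \<Longrightarrow> map f xs = map g ys"
  by (induction rule: list_all2_induct) auto

lemma eqc_imp_wf:
  assumes "eqc ar E s t" "\<forall>(l, r)\<in>E. wf_trm ar l \<and> wf_trm ar r"
  shows "wf_trm ar s \<and> wf_trm ar t"
  using assms(1)
proof (induction rule: eqc.induct)
  case (eqc_cong ss f ts)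
  then have "length ts = ar f" by (simp add: list_all2_lengthD)
  moreover have "\<forall>x\<in>set ss. wf_trm ar x" "\<forall>x\<in>set ts. wf_trm ar x"
    using eqc_cong(2) by (auto simp: list_all2_conv_all_nth in_set_conv_nth)
  ultimately show ?case using eqc_cong(1) by simp
next
  case (eqc_ax l r \<sigma>)
  then show ?case using assms(2) by (auto intro: wf_trm_subst)
qed auto

lemma eqc_subst:
  assumes "eqc ar E s t" "\<forall>n. wf_trm ar (\<sigma> n)"
  shows "eqc ar E (subst \<sigma> s) (subst \<sigma> t)"
  using assms(1)
proof (induction rule: eqc.induct)
  case (eqc_refl t)
  then show ?case using assms(2) by (auto intro!: eqc.eqc_refl wf_trm_subst)
next
  case (eqc_cong ss f ts)
  then have "list_all2 (eqc ar E) (map (subst \<sigma>) ss) (map (subst \<sigma>) ts)"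
    by (auto simp: list.rel_map elim: list_all2_mono)
  then show ?case using eqc_cong(1) by (auto intro: eqc.eqc_cong)
next
  case (eqc_ax l r \<tau>)
  have "eqc ar E (subst (\<lambda>v. subst \<sigma> (\<tau> v)) l) (subst (\<lambda>v. subst \<sigma> (\<tau> v)) r)"
    using eqc_ax assms(2) by (intro eqc.eqc_ax) (auto intro: wf_trm_subst)
  then show ?case by (simp add: subst_subst)
qed (blast intro: eqc.eqc_sym eqc.eqc_trans)+

lemma eqc_subst_cong:
  assumes "wf_trm ar u" "\<And>v. v \<in> vars u \<Longrightarrow> eqc ar E (\<sigma> v) (\<sigma>' v)"
  shows "eqc ar E (subst \<sigma> u) (subst \<sigma>' u)"
  using assms
proof (induction u)
  case (Fun f ts)
  then have "list_all2 (eqc ar E) (map (subst \<sigma>) ts) (map (subst \<sigma>') ts)"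
    by (auto simp: list.rel_map intro!: list.rel_refl_strong)
  then show ?case using Fun.prems by (auto intro: eqc.eqc_cong)
qed simp

lemma eqc_imp_pres_eq:
  assumes "eqc ar E s t" "\<forall>n. wf_over ar G (\<sigma> n)"
  shows "pres_eq ar E G R (subst \<sigma> s) (subst \<sigma> t)"
  using assms(1)
proof (induction rule: eqc.induct)
  case (eqc_refl t)
  then show ?case using assms(2)
    by (intro pres_eq.pres_refl) (fastforce intro!: wf_trm_subst simp: wf_over_def vars_subst)
next
  case (eqc_cong ss f ts)
  then have "list_all2 (pres_eq ar E G R) (map (subst \<sigma>) ss) (map (subst \<sigma>) ts)"
    by (auto simp: list.rel_map elim: list_all2_mono)
  then show ?case using eqc_cong(1) by (auto intro: pres_eq.pres_cong)
next
  case (eqc_ax l r \<tau>)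
  have "pres_eq ar E G R (subst (\<lambda>v. subst \<sigma> (\<tau> v)) l) (subst (\<lambda>v. subst \<sigma> (\<tau> v)) r)"
    using eqc_ax assms(2)
    by (intro pres_eq.pres_ax) (auto intro: wf_trm_subst simp: wf_over_def vars_subst)
  then show ?case by (simp add: subst_subst)
qed (blast intro: pres_eq.pres_sym pres_eq.pres_trans)+

lemma eqc_sound:
  assumes "eqc ar E s t" "model ar E A I" "\<forall>v. \<rho> v \<in> A"
  shows "eval I \<rho> s = eval I \<rho> t"
  using assms(1)
proof (induction rule: eqc.induct)
  case (eqc_cong ss f ts)
  then have "map (eval I \<rho>) ss = map (eval I \<rho>) ts"
    by (intro list_all2_map_eqI) (auto elim: list_all2_mono)
  then show ?case by simp
next
  case (eqc_ax l r \<sigma>)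
  have "\<forall>v. eval I \<rho> (\<sigma> v) \<in> A"
    using eqc_ax(2) assms(2,3) by (auto intro: eval_closed simp: model_def)
  then show ?case using eqc_ax(1) assms(2)
    by (auto simp: eval_subst model_def)
qed auto

lemma pres_eq_sound:
  assumes "pres_eq ar E G R s t" "model ar E A I" "\<And>g. g \<in> G \<Longrightarrow> \<nu> g \<in> A"
    "\<And>s t. R s t \<Longrightarrow> eval I \<nu> s = eval I \<nu> t"
  shows "eval I \<nu> s = eval I \<nu> t"
  using assms(1)
proof (induction rule: pres_eq.induct)
  case (pres_cong ss f ts)
  then have "map (eval I \<nu>) ss = map (eval I \<nu>) ts"
    by (intro list_all2_map_eqI) (auto elim: list_all2_mono)
  then show ?case by simp
next
  case (pres_ax l r \<sigma>)
  have "\<forall>v. eval I \<nu> (\<sigma> v) \<in> A"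
    using pres_ax(2) assms(2,3) by (auto intro: eval_closed simp: wf_over_def model_def)
  then show ?case using pres_ax(1) assms(2)
    by (auto simp: eval_subst model_def)
qed (use assms(4) in auto)

section \<open>Term algebras\<close>

definition eq_class :: "('f \<Rightarrow> nat) \<Rightarrow> (('f, nat) trm \<times> ('f, nat) trm) set \<Rightarrow> ('f, nat) trm
     \<Rightarrow> ('f, nat) trm set" where
  "eq_class ar E t = {s. eqc ar E s t}"

definition class_rep :: "('f \<Rightarrow> nat) \<Rightarrow> (('f, nat) trm \<times> ('f, nat) trm) set \<Rightarrow> ('f, nat) trm set
     \<Rightarrow> ('f, nat) trm" where
  "class_rep ar E c = (SOME t. wf_trm ar t \<and> c = eq_class ar E t)"

definition free_op :: "('f \<Rightarrow> nat) \<Rightarrow> (('f, nat) trm \<times> ('f, nat) trm) set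
     \<Rightarrow> 'f \<Rightarrow> ('f, nat) trm set list \<Rightarrow> ('f, nat) trm set" where
  "free_op ar E f cs = eq_class ar E (Fun f (map (class_rep ar E) cs))"

definition free_carrier :: "('f \<Rightarrow> nat) \<Rightarrow> (('f, nat) trm \<times> ('f, nat) trm) set \<Rightarrow> nat set
     \<Rightarrow> ('f, nat) trm set set" where
  "free_carrier ar E V = {eq_class ar E t | t. wf_trm ar t \<and> vars t \<subseteq> V}"

locale equational_theory =
  fixes ar :: "'f \<Rightarrow> nat" and E :: "(('f, nat) trm \<times> ('f, nat) trm) set"
  assumes wf_eqns: "\<forall>(l, r)\<in>E. wf_trm ar l \<and> wf_trm ar r"
begin

lemma eq_class_eq_iff:
  "wf_trm ar s \<Longrightarrow> wf_trm ar t \<Longrightarrow> eq_class ar E s = eq_class ar E t \<longleftrightarrow> eqc ar E s t"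
proof
  assume "wf_trm ar s" "wf_trm ar t" "eq_class ar E s = eq_class ar E t"
  then show "eqc ar E s t" unfolding eq_class_def by (metis eqc.eqc_refl mem_Collect_eq)
next
  assume "eqc ar E s t"
  then show "eq_class ar E s = eq_class ar E t"
    unfolding eq_class_def by (blast intro: eqc.eqc_trans eqc.eqc_sym)
qed

lemma class_rep_eq_class:
  assumes "wf_trm ar t"
  shows "wf_trm ar (class_rep ar E (eq_class ar E t)) \<and> eqc ar E (class_rep ar E (eq_class ar E t)) t"
proof -
  have "wf_trm ar (class_rep ar E (eq_class ar E t)) \<and>
      eq_class ar E t = eq_class ar E (class_rep ar E (eq_class ar E t))"
    unfolding class_rep_def by (rule someI[of _ t]) (use assms in simp)
  then show ?thesis using eq_class_eq_iff assms by metis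
qed

lemma free_op_eq_class:
  assumes "length ts = ar f" "\<And>t. t \<in> set ts \<Longrightarrow> wf_trm ar t"
  shows "free_op ar E f (map (eq_class ar E) ts) = eq_class ar E (Fun f ts)"
proof -
  have "list_all2 (eqc ar E) (map (class_rep ar E \<circ> eq_class ar E) ts) ts"
    using assms(2) class_rep_eq_class by (auto simp: list.rel_map intro!: list.rel_refl_strong)
  then have "eqc ar E (Fun f (map (class_rep ar E \<circ> eq_class ar E) ts)) (Fun f ts)"
    using assms(1) by (auto intro: eqc.eqc_cong)
  then show ?thesis
    unfolding free_op_def map_map using eqc_imp_wf[OF _ wf_eqns] eq_class_eq_iff by blast
qed

lemma eval_free_op:
  "wf_trm ar u \<Longrightarrow> (\<And>v. v \<in> vars u \<Longrightarrow> wf_trm ar (\<sigma> v) \<and> \<rho> v = eq_class ar E (\<sigma> v))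
   \<Longrightarrow> eval (free_op ar E) \<rho> u = eq_class ar E (subst \<sigma> u)"
proof (induction u)
  case (Fun f ts)
  then have args: "map (eval (free_op ar E) \<rho>) ts = map (eq_class ar E) (map (subst \<sigma>) ts)"
    by auto
  have "\<And>t. t \<in> set (map (subst \<sigma>) ts) \<Longrightarrow> wf_trm ar t"
    using Fun.prems by (auto intro: wf_trm_subst)
  then show ?case
    using Fun.prems(1) free_op_eq_class[of "map (subst \<sigma>) ts" f] by (simp only: eval.simps args) simp
qed simp

lemma free_carrier_class_rep:
  "c \<in> free_carrier ar E V \<Longrightarrow> wf_trm ar (class_rep ar E c) \<and> eq_class ar E (class_rep ar E c) = c"
  unfolding free_carrier_def using class_rep_eq_class eq_class_eq_iff by blast

lemma free_carrier_closed: "closed_under ar (free_op ar E) (free_carrier ar E V)"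
  unfolding closed_under_def
proof (intro allI impI)
  fix f cs assume cs: "length cs = ar f \<and> set cs \<subseteq> free_carrier ar E V"
  then have "\<forall>c\<in>set cs. \<exists>t. wf_trm ar t \<and> vars t \<subseteq> V \<and> c = eq_class ar E t"
    unfolding free_carrier_def by auto
  then obtain g where g: "\<And>c. c \<in> set cs \<Longrightarrow> wf_trm ar (g c) \<and> vars (g c) \<subseteq> V \<and> c = eq_class ar E (g c)"
    by metis
  have "free_op ar E f (map (eq_class ar E) (map g cs)) = eq_class ar E (Fun f (map g cs))"
    using cs g by (intro free_op_eq_class) auto
  moreover have "map (eq_class ar E) (map g cs) = cs"
    using g by (simp add: map_idI)
  ultimately have "free_op ar E f cs = eq_class ar E (Fun f (map g cs))"
    by simp
  moreover have "wf_trm ar (Fun f (map g cs))" "vars (Fun f (map g cs)) \<subseteq> V"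
    using cs g by auto
  ultimately show "free_op ar E f cs \<in> free_carrier ar E V"
    unfolding free_carrier_def by blast
qed

lemma model_free: "model ar E (free_carrier ar E V) (free_op ar E)"
  unfolding model_def
proof (intro conjI free_carrier_closed ballI allI impI, clarify)
  fix l r and \<rho> :: "nat \<Rightarrow> ('f, nat) trm set"
  assume lr: "(l, r) \<in> E" and \<rho>: "\<forall>v. \<rho> v \<in> free_carrier ar E V"
  let ?\<sigma> = "\<lambda>v. class_rep ar E (\<rho> v)"
  have ev: "eval (free_op ar E) \<rho> t = eq_class ar E (subst ?\<sigma> t)" if "wf_trm ar t" for t
    using that \<rho> free_carrier_class_rep by (intro eval_free_op) auto
  have "eqc ar E (subst ?\<sigma> l) (subst ?\<sigma> r)"
    using lr \<rho> free_carrier_class_rep by (intro eqc.eqc_ax) auto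
  moreover have "wf_trm ar l" "wf_trm ar r"
    using lr wf_eqns by auto
  ultimately show "eval (free_op ar E) \<rho> l = eval (free_op ar E) \<rho> r"
    using ev eq_class_eq_iff eqc_imp_wf[OF _ wf_eqns] by metis
qed

end

section \<open>A subtraction term in every semi-abelian variety\<close>

definition subtraction_term :: "('f \<Rightarrow> nat) \<Rightarrow> (('f, nat) trm \<times> ('f, nat) trm) set
     \<Rightarrow> ('f, nat) trm \<Rightarrow> ('f, nat) trm \<Rightarrow> bool" where
  "subtraction_term ar E z q \<longleftrightarrow> wf_trm ar q \<and>
     eqc ar E (subst (\<lambda>_. Var 0) q) z \<and>
     eqc ar E (subst (\<lambda>v. if v = 0 then Var 0 else z) q) (Var 0)"

definition collapse :: "('f \<Rightarrow> nat) \<Rightarrow> (('f, nat) trm \<times> ('f, nat) trm) set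
     \<Rightarrow> ('f, nat) trm set \<Rightarrow> ('f, nat) trm set" where
  "collapse ar E c = eq_class ar E (subst (\<lambda>_. Var 1) (class_rep ar E c))"

definition collapse_kernel :: "('f \<Rightarrow> nat) \<Rightarrow> (('f, nat) trm \<times> ('f, nat) trm) set
     \<Rightarrow> ('f, nat) trm \<Rightarrow> ('f, nat) trm set set" where
  "collapse_kernel ar E z = {b \<in> free_carrier ar E {0, 1}. collapse ar E b = eq_class ar E z}"

definition kernel_or_unary :: "('f \<Rightarrow> nat) \<Rightarrow> (('f, nat) trm \<times> ('f, nat) trm) set
     \<Rightarrow> ('f, nat) trm \<Rightarrow> ('f, nat) trm \<Rightarrow> bool" where
  "kernel_or_unary ar E z k \<longleftrightarrow> wf_trm ar k \<and> (eqc ar E (subst (\<lambda>_. Var 1) k) z \<or> vars k \<subseteq> {1})"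

definition zero_unary :: "('f \<Rightarrow> nat) \<Rightarrow> (('f, nat) trm \<times> ('f, nat) trm) set
     \<Rightarrow> ('f, nat) trm \<Rightarrow> ('f, nat) trm \<Rightarrow> ('f, nat) trm" where
  "zero_unary ar E z k = (if eqc ar E (subst (\<lambda>_. Var 1) k) z then k else subst (\<lambda>_. z) k)"

context equational_theory
begin

lemma collapse_eq_class:
  assumes "wf_trm ar t"
  shows "collapse ar E (eq_class ar E t) = eq_class ar E (subst (\<lambda>_. Var 1) t)"
proof -
  have "eqc ar E (subst (\<lambda>_. Var 1) (class_rep ar E (eq_class ar E t))) (subst (\<lambda>_. Var 1) t)"
    using class_rep_eq_class[OF assms] by (intro eqc_subst) auto
  moreover have "wf_trm ar (subst (\<lambda>_. Var 1) t)"
    using assms by (auto intro: wf_trm_subst)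
  ultimately show ?thesis
    unfolding collapse_def using eq_class_eq_iff eqc_imp_wf[OF _ wf_eqns] by blast
qed

lemma collapse_hom:
  "is_hom ar (free_carrier ar E {0, 1}) (free_op ar E) (free_carrier ar E {1}) (free_op ar E) (collapse ar E)"
  unfolding is_hom_def
proof (intro conjI ballI allI impI)
  fix c assume "c \<in> free_carrier ar E {0, 1}"
  then obtain t where "wf_trm ar t" "c = eq_class ar E t"
    unfolding free_carrier_def by blast
  moreover have "wf_trm ar (subst (\<lambda>_. Var 1) t)" "vars (subst (\<lambda>_. Var 1) t) \<subseteq> {1}"
    using \<open>wf_trm ar t\<close> by (auto intro: wf_trm_subst simp: vars_subst)
  ultimately show "collapse ar E c \<in> free_carrier ar E {1}"
    unfolding free_carrier_def using collapse_eq_class by blast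
next
  fix f cs assume cs: "length cs = ar f \<and> set cs \<subseteq> free_carrier ar E {0, 1}"
  let ?ts = "map (class_rep ar E) cs"
  have rep: "\<And>t. t \<in> set ?ts \<Longrightarrow> wf_trm ar t"
    using cs free_carrier_class_rep by auto
  have "collapse ar E (free_op ar E f cs) = eq_class ar E (Fun f (map (subst (\<lambda>_. Var 1)) ?ts))"
    unfolding free_op_def using cs rep by (subst collapse_eq_class) (auto intro: wf_trm_subst)
  also have "\<dots> = free_op ar E f (map (eq_class ar E) (map (subst (\<lambda>_. Var 1)) ?ts))"
    using cs rep by (intro free_op_eq_class[symmetric]) (auto intro: wf_trm_subst)
  also have "map (eq_class ar E) (map (subst (\<lambda>_. Var 1)) ?ts) = map (collapse ar E) cs"
    unfolding collapse_def by simp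
  finally show "collapse ar E (free_op ar E f cs) = free_op ar E f (map (collapse ar E) cs)" .
qed

lemma collapse_retraction:
  assumes "d \<in> free_carrier ar E {1}"
  shows "collapse ar E d = d"
proof -
  obtain t where t: "wf_trm ar t" "vars t \<subseteq> {1}" "d = eq_class ar E t"
    using assms unfolding free_carrier_def by blast
  then have "subst (\<lambda>_. Var 1) t = subst Var t"
    by (intro subst_cong) auto
  then show ?thesis
    using t collapse_eq_class by simp
qed

end

locale pointed_variety = equational_theory +
  fixes z :: "('f, nat) trm"
  assumes pointed: "pointed_var ar E z"
begin

lemma wf_z: "wf_trm ar z" and ground_z: "vars z = {}"
  using pointed by (auto simp: pointed_var_def)

lemma eqc_ground_z: "wf_trm ar t \<Longrightarrow> vars t = {} \<Longrightarrow> eqc ar E t z"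
  using pointed by (simp add: pointed_var_def)

text \<open>collapse is split by the inclusion of the term algebra on 1, so protomodularity applies.\<close>
lemma protomodular_var0_gen_sub:
  assumes "protomodular_on ar E z TYPE(('f, nat) trm set)"
  shows "eq_class ar E (Var 0) \<in> gen_sub ar (free_op ar E) (collapse_kernel ar E z \<union> free_carrier ar E {1})"
proof -
  let ?B = "free_carrier ar E {0, 1}" and ?D = "free_carrier ar E {1}"
  have zero: "eval (free_op ar E) (\<lambda>_. undefined) z = eq_class ar E z"
    using eval_free_op[of z Var] wf_z ground_z by simp
  have "is_hom ar ?D (free_op ar E) ?B (free_op ar E) (\<lambda>c. c)"
    unfolding is_hom_def free_carrier_def by auto
  then have "?B \<subseteq> gen_sub ar (free_op ar E) (collapse_kernel ar E z \<union> (\<lambda>c. c) ` ?D)"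
    unfolding collapse_kernel_def zero[symmetric]
    by (intro assms[unfolded protomodular_on_def, rule_format])
      (use model_free collapse_hom collapse_retraction in auto)
  moreover have "eq_class ar E (Var 0) \<in> ?B"
    unfolding free_carrier_def by auto
  ultimately show ?thesis by auto
qed

lemma kernel_or_unary_rep:
  assumes "g \<in> collapse_kernel ar E z \<union> free_carrier ar E {1}"
  shows "\<exists>k. kernel_or_unary ar E z k \<and> g = eq_class ar E k"
proof (cases "g \<in> collapse_kernel ar E z")
  case True
  then obtain k where k: "wf_trm ar k" "g = eq_class ar E k"
    unfolding collapse_kernel_def free_carrier_def by blast
  then have "eq_class ar E (subst (\<lambda>_. Var 1) k) = eq_class ar E z"
    using True collapse_eq_class by (simp add: collapse_kernel_def)
  moreover have "wf_trm ar (subst (\<lambda>_. Var 1) k)"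
    using k by (auto intro: wf_trm_subst)
  ultimately have "eqc ar E (subst (\<lambda>_. Var 1) k) z"
    using wf_z eq_class_eq_iff by blast
  then show ?thesis
    using k by (auto simp: kernel_or_unary_def)
next
  case False
  with assms obtain k where "wf_trm ar k" "vars k \<subseteq> {1}" "g = eq_class ar E k"
    unfolding free_carrier_def by blast
  then show ?thesis
    by (auto simp: kernel_or_unary_def)
qed

text \<open>The variables of u are representatives of the generators of the subalgebra.\<close>
lemma protomodular_decomposition:
  assumes "protomodular_on ar E z TYPE(('f, nat) trm set)"
  obtains u :: "('f, ('f, nat) trm) trm"
  where "wf_trm ar u" and "\<And>k. k \<in> vars u \<Longrightarrow> kernel_or_unary ar E z k"
    and "eqc ar E (Var 0) (subst (\<lambda>k. k) u)"
proof -
  obtain u' where u': "wf_trm ar u'" "vars u' \<subseteq> collapse_kernel ar E z \<union> free_carrier ar E {1}"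
      "eval (free_op ar E) (\<lambda>c. c) u' = eq_class ar E (Var 0)"
    using protomodular_var0_gen_sub[OF assms]
      gen_sub_subset_term_values[of ar "free_op ar E" "collapse_kernel ar E z \<union> free_carrier ar E {1}"]
    by auto
  define \<tau> where "\<tau> g = (SOME k. kernel_or_unary ar E z k \<and> g = eq_class ar E k)" for g
  have \<tau>: "kernel_or_unary ar E z (\<tau> g) \<and> g = eq_class ar E (\<tau> g)" if "g \<in> vars u'" for g
    unfolding \<tau>_def using someI_ex[OF kernel_or_unary_rep[OF subsetD[OF u'(2) that]]] .
  then have wf_\<tau>: "wf_trm ar (\<tau> g)" if "g \<in> vars u'" for g
    using that by (simp add: kernel_or_unary_def)
  show thesis
  proof
    show "wf_trm ar (subst (Var \<circ> \<tau>) u')"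
      using u'(1) by (auto intro: wf_trm_subst)
    show "kernel_or_unary ar E z k" if "k \<in> vars (subst (Var \<circ> \<tau>) u')" for k
      using that \<tau> by (auto simp: vars_subst)
    have "eval (free_op ar E) (\<lambda>c. c) u' = eq_class ar E (subst \<tau> u')"
      using u'(1) \<tau> wf_\<tau> by (intro eval_free_op) auto
    moreover have "wf_trm ar (subst \<tau> u')"
      using u'(1) wf_\<tau> by (auto intro: wf_trm_subst)
    ultimately have "eqc ar E (Var 0) (subst \<tau> u')"
      using u'(3) eq_class_eq_iff[of "Var 0"] by auto
    then show "eqc ar E (Var 0) (subst (\<lambda>k. k) (subst (Var \<circ> \<tau>) u'))"
      by (simp add: subst_subst)
  qed
qed

lemma wf_zero_unary: "kernel_or_unary ar E z k \<Longrightarrow> wf_trm ar (zero_unary ar E z k)"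
  using wf_z by (auto simp: kernel_or_unary_def zero_unary_def intro: wf_trm_subst)

lemma zero_unary_diagonal:
  assumes "kernel_or_unary ar E z k"
  shows "eqc ar E (subst (\<lambda>_. Var 0) (zero_unary ar E z k)) z"
proof (cases "eqc ar E (subst (\<lambda>_. Var 1) k) z")
  case True
  from eqc_subst[OF this, of "\<lambda>_. Var 0"] show ?thesis
    using True by (simp add: zero_unary_def subst_subst subst_ground_id[OF ground_z])
next
  case False
  then show ?thesis
    using assms wf_z ground_z
    by (auto simp: zero_unary_def kernel_or_unary_def subst_subst vars_subst subst_ground_id
        intro!: eqc_ground_z wf_trm_subst)
qed

lemma zero_unary_at_zero:
  assumes "kernel_or_unary ar E z k"
  shows "subst (\<lambda>v. if v = 0 then Var 0 else z) (zero_unary ar E z k)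
       = subst (\<lambda>v. if v = 0 then Var 0 else z) k"
proof (cases "eqc ar E (subst (\<lambda>_. Var 1) k) z")
  case False
  then have "vars k \<subseteq> {1}"
    using assms by (simp add: kernel_or_unary_def)
  then have "subst (\<lambda>v. if v = 0 then Var 0 else z) k = subst (\<lambda>_. z) k"
    by (intro subst_cong) auto
  then show ?thesis
    using False by (simp add: zero_unary_def subst_subst subst_ground_id[OF ground_z])
qed (simp add: zero_unary_def)

lemma decomposition_subtraction_term:
  fixes u :: "('f, ('f, nat) trm) trm"
  assumes u: "wf_trm ar u" and vars_u: "\<And>k. k \<in> vars u \<Longrightarrow> kernel_or_unary ar E z k"
    and var0: "eqc ar E (Var 0) (subst (\<lambda>k. k) u)"
  shows "subtraction_term ar E z (subst (zero_unary ar E z) u)"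
proof -
  let ?\<zeta> = "\<lambda>v. if v = 0 then Var 0 else z"
  have "eqc ar E (subst (\<lambda>k. subst (\<lambda>_. Var 0) (zero_unary ar E z k)) u) (subst (\<lambda>_. z) u)"
    using u vars_u zero_unary_diagonal by (intro eqc_subst_cong) auto
  also have "eqc ar E (subst (\<lambda>_. z) u) z"
    using u wf_z ground_z by (auto intro!: eqc_ground_z wf_trm_subst simp: vars_subst)
  finally have diagonal: "eqc ar E (subst (\<lambda>_. Var 0) (subst (zero_unary ar E z) u)) z"
    by (simp add: subst_subst)
  have "subst ?\<zeta> (subst (zero_unary ar E z) u) = subst ?\<zeta> (subst (\<lambda>k. k) u)"
    unfolding subst_subst using vars_u zero_unary_at_zero by (intro subst_cong) auto
  moreover have "eqc ar E (Var 0) (subst ?\<zeta> (subst (\<lambda>k. k) u))"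
    using eqc_subst[OF var0, of ?\<zeta>] wf_z by simp
  ultimately have at_zero: "eqc ar E (subst ?\<zeta> (subst (zero_unary ar E z) u)) (Var 0)"
    by (simp add: eqc.eqc_sym)
  show ?thesis
    unfolding subtraction_term_def
    using u vars_u wf_zero_unary diagonal at_zero by (auto intro: wf_trm_subst)
qed

lemma protomodular_subtraction_term:
  assumes "protomodular_on ar E z TYPE(('f, nat) trm set)"
  obtains q where "subtraction_term ar E z q"
proof -
  obtain u :: "('f, ('f, nat) trm) trm" where
      "wf_trm ar u" "\<And>k. k \<in> vars u \<Longrightarrow> kernel_or_unary ar E z k"
      "eqc ar E (Var 0) (subst (\<lambda>k. k) u)"
    using protomodular_decomposition[OF assms] by blast
  then show thesis
    by (rule that[OF decomposition_subtraction_term])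
qed

end

section \<open>Commutator terms from a subtraction term\<close>

definition zero_vars :: "('f, nat) trm \<Rightarrow> nat set \<Rightarrow> ('f, nat) trm \<Rightarrow> ('f, nat) trm" where
  "zero_vars z S t = subst (\<lambda>v. if v \<in> S then z else Var v) t"

definition subtract :: "('f, nat) trm \<Rightarrow> ('f, nat) trm \<Rightarrow> ('f, nat) trm \<Rightarrow> ('f, nat) trm" where
  "subtract q a b = subst (\<lambda>v. if v = 0 then a else b) q"

text \<open>q(t, t[S:=0]) is 0 once the variables in S are 0, and equals t where t[S:=0] is 0.\<close>
definition vanish_on :: "('f, nat) trm \<Rightarrow> ('f, nat) trm \<Rightarrow> nat set \<Rightarrow> ('f, nat) trm \<Rightarrow> ('f, nat) trm" where
  "vanish_on q z S t = subtract q t (zero_vars z S t)"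

lemma subst_subtract: "subst \<sigma> (subtract q a b) = subtract q (subst \<sigma> a) (subst \<sigma> b)"
  unfolding subtract_def subst_subst by (rule subst_cong) simp

lemma zero_vars_subtract: "zero_vars z S (subtract q a b) = subtract q (zero_vars z S a) (zero_vars z S b)"
  unfolding zero_vars_def by (rule subst_subtract)

lemma zero_vars_zero_vars: "vars z = {} \<Longrightarrow> zero_vars z S (zero_vars z S' t) = zero_vars z (S \<union> S') t"
  unfolding zero_vars_def subst_subst by (rule subst_cong) (auto simp: subst_ground_id)

lemma zero_vars_vanish_on_commute:
  "vars z = {} \<Longrightarrow> zero_vars z S (vanish_on q z S' t) = vanish_on q z S' (zero_vars z S t)"
  unfolding vanish_on_def zero_vars_subtract by (simp add: zero_vars_zero_vars Un_commute)

locale subtractive_variety = pointed_variety +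
  fixes q :: "('f, nat) trm"
  assumes subtraction: "subtraction_term ar E z q"
begin

lemma wf_subtract: "wf_trm ar a \<Longrightarrow> wf_trm ar b \<Longrightarrow> wf_trm ar (subtract q a b)"
  using subtraction unfolding subtract_def subtraction_term_def by (auto intro: wf_trm_subst)

lemma wf_zero_vars: "wf_trm ar t \<Longrightarrow> wf_trm ar (zero_vars z S t)"
  unfolding zero_vars_def using wf_z by (auto intro: wf_trm_subst)

lemma wf_vanish_on: "wf_trm ar t \<Longrightarrow> wf_trm ar (vanish_on q z S t)"
  unfolding vanish_on_def by (intro wf_subtract wf_zero_vars)

lemma subtract_self: "wf_trm ar a \<Longrightarrow> eqc ar E (subtract q a a) z"
  using subtraction eqc_subst[of ar E "subst (\<lambda>_. Var 0) q" z "\<lambda>_. a"]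
  unfolding subtraction_term_def subtract_def subst_subst by (simp add: subst_ground_id[OF ground_z])

lemma subtract_cong: "eqc ar E a a' \<Longrightarrow> eqc ar E b b' \<Longrightarrow> eqc ar E (subtract q a b) (subtract q a' b')"
  using subtraction unfolding subtract_def subtraction_term_def by (intro eqc_subst_cong) auto

lemma zero_vars_cong: "eqc ar E a b \<Longrightarrow> eqc ar E (zero_vars z S a) (zero_vars z S b)"
  unfolding zero_vars_def using wf_z by (intro eqc_subst) auto

lemma vanish_on_cong: "eqc ar E a b \<Longrightarrow> eqc ar E (vanish_on q z S a) (vanish_on q z S b)"
  unfolding vanish_on_def by (intro subtract_cong zero_vars_cong)

lemma zero_vars_vanish_on: "wf_trm ar t \<Longrightarrow> eqc ar E (zero_vars z S (vanish_on q z S t)) z"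
  unfolding vanish_on_def zero_vars_subtract zero_vars_zero_vars[OF ground_z] Un_absorb
  by (intro subtract_self wf_zero_vars)

lemma comm_term_vanish_on:
  assumes t: "wf_trm ar t" and disj: "Xv \<inter> Yv = {}"
  shows "comm_term ar E z Xv Yv (vanish_on q z Xv (vanish_on q z Yv t))"
proof -
  have "zero_vars z Yv (vanish_on q z Xv (vanish_on q z Yv t))
      = vanish_on q z Xv (zero_vars z Yv (vanish_on q z Yv t))"
    by (rule zero_vars_vanish_on_commute[OF ground_z])
  also have "eqc ar E \<dots> (vanish_on q z Xv z)"
    by (intro vanish_on_cong zero_vars_vanish_on t)
  also have "vanish_on q z Xv z = subtract q z z"
    unfolding vanish_on_def zero_vars_def by (simp add: subst_ground_id[OF ground_z])
  also have "eqc ar E \<dots> z"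
    by (rule subtract_self[OF wf_z])
  finally have "eqc ar E (zero_vars z Yv (vanish_on q z Xv (vanish_on q z Yv t))) z" .
  then show ?thesis
    unfolding comm_term_def zero_vars_def[symmetric]
    using disj t by (simp add: wf_vanish_on zero_vars_vanish_on)
qed

end

locale subtractive_algebra = subtractive_variety +
  fixes A :: "'a set" and I :: "'f \<Rightarrow> 'a list \<Rightarrow> 'a"
  assumes model: "model ar E A I"
begin

definition zero_A :: 'a where
  "zero_A = eval I (\<lambda>_. undefined) z"

lemma closed_A: "closed_under ar I A"
  using model by (simp add: model_def)

lemma zero_A_in: "zero_A \<in> A"
  unfolding zero_A_def using eval_closed[OF closed_A wf_z] ground_z by auto

lemma eval_z: "eval I \<rho> z = zero_A"
  unfolding zero_A_def by (rule eval_ground[OF ground_z])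

lemma op_zero_A: "length xs = ar f \<Longrightarrow> I f (map (\<lambda>_. zero_A) xs) = zero_A"
proof -
  assume len: "length xs = ar f"
  have "eqc ar E (Fun f (map (\<lambda>_. z) xs)) z"
    using len wf_z ground_z by (intro eqc_ground_z) auto
  from eqc_sound[OF this model, of "\<lambda>_. zero_A"] show ?thesis
    using zero_A_in by (simp add: eval_z comp_def)
qed

lemma eval_zero_vars: "eval I \<rho> (zero_vars z S t) = eval I (\<lambda>v. if v \<in> S then zero_A else \<rho> v) t"
  unfolding zero_vars_def eval_subst by (rule eval_cong) (simp add: eval_z)

lemma eval_subtract:
  assumes "a \<in> A"
  shows "eval I (\<lambda>v. if v = 0 then a else zero_A) q = a"
  using eqc_sound[OF conjunct2[OF conjunct2[OF subtraction[unfolded subtraction_term_def]]] model,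
      of "\<lambda>v. if v = 0 then a else zero_A"] assms zero_A_in
  by (simp add: eval_subst eval_z if_distrib cong: if_cong)

lemma eval_vanish_on:
  assumes "\<forall>v. \<rho> v \<in> A" "wf_trm ar t" "eval I \<rho> (zero_vars z S t) = zero_A"
  shows "eval I \<rho> (vanish_on q z S t) = eval I \<rho> t"
proof -
  have "eval I \<rho> t \<in> A"
    using assms(1,2) by (intro eval_closed[OF closed_A]) auto
  then show ?thesis
    unfolding vanish_on_def subtract_def eval_subst using assms(3) eval_subtract
    by (simp add: if_distrib cong: if_cong)
qed

lemma eval_vanish_on_vanish_on:
  assumes \<rho>: "\<forall>v. \<rho> v \<in> A" and t: "wf_trm ar t"
    and X: "eval I \<rho> (zero_vars z Xv t) = zero_A"
    and Y: "eval I \<rho> (zero_vars z Yv t) = zero_A"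
    and XY: "eval I \<rho> (zero_vars z (Yv \<union> Xv) t) = zero_A"
  shows "eval I \<rho> (vanish_on q z Xv (vanish_on q z Yv t)) = eval I \<rho> t"
proof -
  have "eval I \<rho> (zero_vars z Xv (vanish_on q z Yv t)) = eval I \<rho> (zero_vars z Xv t)"
    unfolding zero_vars_vanish_on_commute[OF ground_z]
    using \<rho> t XY X by (intro eval_vanish_on wf_zero_vars) (auto simp: zero_vars_zero_vars[OF ground_z])
  then show ?thesis
    using \<rho> t X Y by (simp add: eval_vanish_on wf_vanish_on)
qed

end

section \<open>The two commutators\<close>

definition copair :: "('a \<Rightarrow> 'a) \<Rightarrow> 'a + 'a \<Rightarrow> 'a" where
  "copair h = (\<lambda>g. case g of Inl a \<Rightarrow> a | Inr x \<Rightarrow> h x)"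

definition cotriple :: "('a \<Rightarrow> 'a) \<Rightarrow> ('a \<Rightarrow> 'a) \<Rightarrow> 'a + 'a + 'a \<Rightarrow> 'a" where
  "cotriple h k = (\<lambda>g. case g of Inl a \<Rightarrow> a | Inr (Inl x) \<Rightarrow> h x | Inr (Inr y) \<Rightarrow> k y)"

lemma eq2_sound:
  fixes I :: "'f \<Rightarrow> 'a list \<Rightarrow> 'a"
  assumes "eq2 ar E I A X s t" "model ar E A I" "\<forall>x\<in>X. h x \<in> A"
    "\<And>f xs. length xs = ar f \<Longrightarrow> set xs \<subseteq> X \<Longrightarrow> h (I f xs) = I f (map h xs)"
  shows "eval I (copair h) s = eval I (copair h) t"
  using assms(1) unfolding eq2_def
proof (rule pres_eq_sound[OF _ assms(2)])
  fix g assume "g \<in> gens2 A X"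
  then show "copair h g \<in> A"
    using assms(3) by (auto simp: gens2_def copair_def)
next
  fix s t :: "('f, 'a + 'a) trm" assume "rel2 ar I A X s t"
  then show "eval I (copair h) s = eval I (copair h) t"
    unfolding rel2_def diag_def using assms(4) by (auto simp: comp_def copair_def)
qed

definition tag2 :: "nat set \<Rightarrow> (nat \<Rightarrow> 'a) \<Rightarrow> nat \<Rightarrow> ('f, 'a + 'a) trm" where
  "tag2 S \<rho> v = (if v \<in> S then Var (Inr (\<rho> v)) else Var (Inl (\<rho> v)))"

definition tag3 :: "nat set \<Rightarrow> nat set \<Rightarrow> (nat \<Rightarrow> 'a) \<Rightarrow> nat \<Rightarrow> ('f, 'a + 'a + 'a) trm" where
  "tag3 Xv Yv \<rho> v = (if v \<in> Xv then Var (Inr (Inl (\<rho> v)))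
     else if v \<in> Yv then Var (Inr (Inr (\<rho> v))) else Var (Inl (\<rho> v)))"

lemma to_AX_tag3:
  assumes "Xv \<inter> Yv = {}" "vars z = {}"
  shows "to_AX z (subst (tag3 Xv Yv \<rho>) t) = subst (tag2 Xv \<rho>) (zero_vars z Yv t)"
  unfolding to_AX_def zero_vars_def subst_subst
  by (rule subst_cong) (use assms in \<open>auto simp: tag2_def tag3_def ground_as_def intro: subst_ground\<close>)

lemma to_AY_tag3:
  assumes "Xv \<inter> Yv = {}" "vars z = {}"
  shows "to_AY z (subst (tag3 Xv Yv \<rho>) t) = subst (tag2 Yv \<rho>) (zero_vars z Xv t)"
  unfolding to_AY_def zero_vars_def subst_subst
  by (rule subst_cong) (use assms in \<open>auto simp: tag2_def tag3_def ground_as_def intro: subst_ground\<close>)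

lemma inj_on_extend_valuation:
  assumes "inj_on enc V" "\<And>g. g \<in> V \<Longrightarrow> f g \<in> A" "a \<in> A"
  obtains \<rho> :: "nat \<Rightarrow> 'a" where "\<forall>m. \<rho> m \<in> A" "\<And>g. g \<in> V \<Longrightarrow> \<rho> (enc g) = f g"
proof
  let ?\<rho> = "\<lambda>m. if m \<in> enc ` V then f (inv_into V enc m) else a"
  show "\<forall>m. ?\<rho> m \<in> A"
    using assms by (auto intro: inv_into_into)
  show "?\<rho> (enc g) = f g" if "g \<in> V" for g
    using assms(1) that by simp
qed

context subtractive_algebra
begin

lemma eval_ground_as: "eval I \<rho> (ground_as z) = zero_A"
  unfolding ground_as_def eval_subst by (rule eval_z)

lemma eval_to_AX: "eval I (copair h) (to_AX z T) = eval I (cotriple h (\<lambda>_. zero_A)) T"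
  unfolding to_AX_def eval_subst
  by (rule eval_cong) (auto simp: copair_def cotriple_def eval_ground_as split: sum.splits)

lemma eval_to_AY: "eval I (copair h) (to_AY z T) = eval I (cotriple (\<lambda>_. zero_A) h) T"
  unfolding to_AY_def eval_subst
  by (rule eval_cong) (auto simp: copair_def cotriple_def eval_ground_as split: sum.splits)

lemma kernel_eval_zero:
  assumes XA: "X \<subseteq> A" and YA: "Y \<subseteq> A"
    and kerX: "eq2 ar E I A X (to_AX z T) (ground_as z)"
    and kerY: "eq2 ar E I A Y (to_AY z T) (ground_as z)"
  shows "eval I (cotriple (\<lambda>x. x) (\<lambda>_. zero_A)) T = zero_A"
    and "eval I (cotriple (\<lambda>_. zero_A) (\<lambda>y. y)) T = zero_A"
    and "eval I (cotriple (\<lambda>_. zero_A) (\<lambda>_. zero_A)) T = zero_A"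
  using eq2_sound[OF kerX model, of "\<lambda>x. x"] eq2_sound[OF kerY model, of "\<lambda>y. y"]
    eq2_sound[OF kerX model, of "\<lambda>_. zero_A"] XA YA
  by (auto simp: eval_to_AX eval_to_AY eval_ground_as zero_A_in op_zero_A)

lemma eval_zero_vars_rename:
  assumes "inj_on enc (vars T)" "P \<subseteq> vars T"
  shows "eval I \<rho> (zero_vars z (enc ` P) (subst (Var \<circ> enc) T))
       = eval I (\<lambda>g. if g \<in> P then zero_A else \<rho> (enc g)) T"
  unfolding eval_zero_vars eval_subst
  by (rule eval_cong) (use assms in \<open>simp add: inj_on_image_mem_iff\<close>)

text \<open>Comm_term only speaks about terms over nat, so the finitely many generators occurring in a
term of A+X+Y are numbered.\<close>
lemma gens3_renaming:
  assumes T: "wf_over ar (gens3 A X Y) T" and XA: "X \<subseteq> A" and YA: "Y \<subseteq> A"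
  obtains t \<rho> Xv Yv where "wf_trm ar t" "\<forall>m. \<rho> m \<in> A" "\<rho> ` Xv \<subseteq> X" "\<rho> ` Yv \<subseteq> Y" "Xv \<inter> Yv = {}"
    and "eval I \<rho> t = fold3 I T"
    and "eval I \<rho> (zero_vars z Xv t) = eval I (cotriple (\<lambda>_. zero_A) (\<lambda>y. y)) T"
    and "eval I \<rho> (zero_vars z Yv t) = eval I (cotriple (\<lambda>x. x) (\<lambda>_. zero_A)) T"
    and "eval I \<rho> (zero_vars z (Yv \<union> Xv) t) = eval I (cotriple (\<lambda>_. zero_A) (\<lambda>_. zero_A)) T"
proof -
  let ?V = "vars T"
  obtain enc :: "'a + 'a + 'a \<Rightarrow> nat" where enc: "inj_on enc ?V"
    using finite_imp_inj_to_nat_seg[OF finite_vars[of T]] by blast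
  have gens: "(\<exists>a\<in>A. g = Inl a) \<or> (\<exists>x\<in>X. g = Inr (Inl x)) \<or> (\<exists>y\<in>Y. g = Inr (Inr y))"
    if "g \<in> ?V" for g
    using T that by (auto simp: wf_over_def gens3_def)
  have "cotriple (\<lambda>x. x) (\<lambda>y. y) g \<in> A" if "g \<in> ?V" for g
    using gens[OF that] XA YA by (auto simp: cotriple_def)
  then obtain \<rho> where \<rho>A: "\<forall>m. \<rho> m \<in> A"
    and \<rho>_enc: "\<And>g. g \<in> ?V \<Longrightarrow> \<rho> (enc g) = cotriple (\<lambda>x. x) (\<lambda>y. y) g"
    using inj_on_extend_valuation[OF enc _ zero_A_in] by blast
  define PX where "PX = {g \<in> ?V. \<exists>x. g = Inr (Inl x)}"
  define PY where "PY = {g \<in> ?V. \<exists>y. g = Inr (Inr y)}"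
  have P: "PX \<subseteq> ?V" "PY \<subseteq> ?V" "PY \<union> PX \<subseteq> ?V"
    by (auto simp: PX_def PY_def)
  show thesis
  proof (rule that[of "subst (Var \<circ> enc) T" \<rho> "enc ` PX" "enc ` PY"])
    show "wf_trm ar (subst (Var \<circ> enc) T)"
      using T by (auto simp: wf_over_def intro: wf_trm_subst)
    show "\<rho> ` enc ` PX \<subseteq> X" "\<rho> ` enc ` PY \<subseteq> Y"
      using \<rho>_enc by (auto simp: PX_def PY_def cotriple_def dest: gens)
    show "enc ` PX \<inter> enc ` PY = {}"
      using enc by (auto simp: PX_def PY_def inj_on_def)
    show "eval I \<rho> (subst (Var \<circ> enc) T) = fold3 I T"
      unfolding fold3_def eval_subst by (rule eval_cong) (simp add: \<rho>_enc cotriple_def)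
    show "eval I \<rho> (zero_vars z (enc ` PX) (subst (Var \<circ> enc) T))
        = eval I (cotriple (\<lambda>_. zero_A) (\<lambda>y. y)) T"
      unfolding eval_zero_vars_rename[OF enc P(1)]
      by (rule eval_cong) (auto simp: PX_def \<rho>_enc cotriple_def split: sum.splits)
    show "eval I \<rho> (zero_vars z (enc ` PY) (subst (Var \<circ> enc) T))
        = eval I (cotriple (\<lambda>x. x) (\<lambda>_. zero_A)) T"
      unfolding eval_zero_vars_rename[OF enc P(2)]
      by (rule eval_cong) (auto simp: PY_def \<rho>_enc cotriple_def split: sum.splits)
    show "eval I \<rho> (zero_vars z (enc ` PY \<union> enc ` PX) (subst (Var \<circ> enc) T))
        = eval I (cotriple (\<lambda>_. zero_A) (\<lambda>_. zero_A)) T"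
      unfolding image_Un[symmetric] eval_zero_vars_rename[OF enc P(3)]
      by (rule eval_cong) (auto simp: PX_def PY_def \<rho>_enc cotriple_def split: sum.splits)
  qed (fact \<rho>A)
qed

lemma comm_A1_subset_comm_CA:
  assumes XA: "X \<subseteq> A" and YA: "Y \<subseteq> A"
  shows "comm_A1 ar E z A I X Y \<subseteq> comm_CA ar E z A I X Y"
proof
  fix e assume "e \<in> comm_A1 ar E z A I X Y"
  then obtain T where e: "e = fold3 I T" and T: "wf_over ar (gens3 A X Y) T"
    and kerX: "eq2 ar E I A X (to_AX z T) (ground_as z)"
    and kerY: "eq2 ar E I A Y (to_AY z T) (ground_as z)"
    unfolding comm_A1_def mem_Collect_eq by (elim exE conjE)
  obtain t \<rho> Xv Yv where t: "wf_trm ar t" and \<rho>: "\<forall>m. \<rho> m \<in> A" "\<rho> ` Xv \<subseteq> X" "\<rho> ` Yv \<subseteq> Y"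
    and disj: "Xv \<inter> Yv = {}" and t_value: "eval I \<rho> t = e"
    and zeros: "eval I \<rho> (zero_vars z Xv t) = zero_A" "eval I \<rho> (zero_vars z Yv t) = zero_A"
      "eval I \<rho> (zero_vars z (Yv \<union> Xv) t) = zero_A"
    using gens3_renaming[OF T XA YA] kernel_eval_zero[OF XA YA kerX kerY] e by metis
  have "eval I \<rho> (vanish_on q z Xv (vanish_on q z Yv t)) = e"
    using eval_vanish_on_vanish_on[OF \<rho>(1) t zeros] t_value by simp
  then show "e \<in> comm_CA ar E z A I X Y"
    unfolding comm_CA_def using comm_term_vanish_on[OF t disj] \<rho> by blast
qed

lemma eq2_subst_tag2:
  assumes "eqc ar E s z" "\<forall>v. \<rho> v \<in> A" "\<rho> ` S \<subseteq> X"
  shows "eq2 ar E I A X (subst (tag2 S \<rho>) s) (ground_as z)"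
proof -
  have "\<forall>v. wf_over ar (gens2 A X) (tag2 S \<rho> v)"
    using assms(2,3) by (auto simp: tag2_def wf_over_def gens2_def)
  from eqc_imp_pres_eq[OF assms(1) this] show ?thesis
    unfolding eq2_def ground_as_def using subst_ground[OF ground_z] by metis
qed

lemma comm_CA_subset_comm_A1: "comm_CA ar E z A I X Y \<subseteq> comm_A1 ar E z A I X Y"
proof
  fix e assume "e \<in> comm_CA ar E z A I X Y"
  then obtain t \<rho> Xv Yv where e: "e = eval I \<rho> t" and ct: "comm_term ar E z Xv Yv t"
    and \<rho>A: "\<forall>v. \<rho> v \<in> A" and \<rho>X: "\<rho> ` Xv \<subseteq> X" and \<rho>Y: "\<rho> ` Yv \<subseteq> Y"
    unfolding comm_CA_def mem_Collect_eq by (elim exE conjE)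
  have t: "wf_trm ar t" and disj: "Xv \<inter> Yv = {}"
    and zero_X: "eqc ar E (zero_vars z Xv t) z" and zero_Y: "eqc ar E (zero_vars z Yv t) z"
    using ct unfolding comm_term_def zero_vars_def by auto
  let ?T = "subst (tag3 Xv Yv \<rho>) t"
  have "wf_over ar (gens3 A X Y) ?T"
    unfolding wf_over_def vars_subst using t \<rho>A \<rho>X \<rho>Y
    by (auto intro: wf_trm_subst simp: tag3_def gens3_def image_subset_iff split: if_splits)
  moreover have "fold3 I ?T = e"
    unfolding fold3_def eval_subst e by (rule eval_cong) (simp add: tag3_def)
  moreover have "eq2 ar E I A X (to_AX z ?T) (ground_as z)"
    unfolding to_AX_tag3[OF disj ground_z] by (rule eq2_subst_tag2[OF zero_Y \<rho>A \<rho>X])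
  moreover have "eq2 ar E I A Y (to_AY z ?T) (ground_as z)"
    unfolding to_AY_tag3[OF disj ground_z] by (rule eq2_subst_tag2[OF zero_X \<rho>A \<rho>Y])
  ultimately show "e \<in> comm_A1 ar E z A I X Y"
    unfolding comm_A1_def by blast
qed

end

theorem theorem7p6:
  fixes ar :: "'f \<Rightarrow> nat"
    and E :: "(('f, nat) trm \<times> ('f, nat) trm) set"
    and z :: "('f, nat) trm"
    and A X Y :: "'a set"
    and I :: "'f \<Rightarrow> 'a list \<Rightarrow> 'a"
  assumes "semi_abelian_on ar E z TYPE(('f, nat) trm set)"
    and "model ar E A I"
    and "X \<subseteq> A" and "closed_under ar I X"
    and "Y \<subseteq> A" and "closed_under ar I Y"
  shows "comm_CA ar E z A I X Y = comm_A1 ar E z A I X Y"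
proof -
  interpret pointed_variety ar E z
    using assms(1) by unfold_locales (auto simp: semi_abelian_on_def)
  obtain q where "subtraction_term ar E z q"
    using assms(1) protomodular_subtraction_term by (auto simp: semi_abelian_on_def)
  then interpret subtractive_algebra ar E z q A I
    using assms(2) by unfold_locales
  show ?thesis
    using comm_A1_subset_comm_CA[OF assms(3,5)] comm_CA_subset_comm_A1 by blast
qed

end
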